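(* Let $\min(p,q)\ge 2$ and let $M_0, M_1, M_2$ be three Minkowski patches of $\widetilde{\mathrm{Ein}}^{p,q}$ with $M_1 \neq \iota(M_2)$, such that for a stereographic projection $s : M_0\to\mathbb{R}^{p,q}$, both $s(M_0\cap M_1)$ and $s(M_0\cap M_2)$ are of the form $H_{w,\alpha}$ with $w\in\mathcal{C}\setminus\{0\}$, $\alpha\in\mathbb{R}$. If $M_0 \cap M_1$ and $M_0 \cap M_2$ are disjoint, then $\iota(M_0) \subset M_1 \cup M_2$.
   Context: $\widetilde{\mathrm{Ein}}^{p,q}\cong\mathbb{S}^p\times\mathbb{S}^q$ is the set of isotropic vectors of Euclidean norm 1 in $\mathbb{R}^{p+1,q+1}$, double covering $\mathrm{Ein}^{p,q}$ (isotropic lines) via $\pi_{\mathbf{X}}$; $\iota$ is the product of antipodal maps. Minkowski patches of $\widetilde{\mathrm{Ein}}^{p,q}$ are the connected components of $\pi_{\mathbf{X}}^{-1}(\{[u]:B(v,u)\neq0\})$, $v$ isotropic. A stereographic projection is a conformal diffeomorphism from a Minkowski patch onto $\mathbb{R}^{p,q}$. On $\mathbb{R}^{p,q}$ ($n=p+q$): $b(v,w) = -v_1w_1 - \cdots - v_pw_p + v_{p+1}w_{p+1} + \cdots + v_nw_n$, $\mathcal{C}=\{v:b(v,v)=0\}$, and $H_{w,\alpha}=\{v: b(w,v)>\alpha\}$. *)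

theory Defs
  imports "HOL-Analysis.Analysis"
begin

text \<open>Pseudo-Euclidean form on real^'n whose negative-signature coordinates are
  the index set N (so p = card N, q = CARD('n) - card N).\<close>
definition pform :: "'n::finite set \<Rightarrow> real^'n \<Rightarrow> real^'n \<Rightarrow> real" where
  "pform N v w = (\<Sum>i\<in>UNIV. (if i \<in> N then -1 else 1) * (v$i * w$i))"

definition light_cone :: "'n::finite set \<Rightarrow> (real^'n) set" where
  "light_cone N = {v. pform N v v = 0}"

definition Hset :: "'n::finite set \<Rightarrow> real^'n \<Rightarrow> real \<Rightarrow> (real^'n) set" where
  "Hset N w \<alpha> = {v. pform N w v > \<alpha>}"

text \<open>Double cover of the Einstein universe: isotropic vectors of Euclidean norm 1.\<close>
definition Ein_tilde :: "'m::finite set \<Rightarrow> (real^'m) set" where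
  "Ein_tilde N' = {u. pform N' u u = 0 \<and> norm u = 1}"

definition iota :: "real^'m \<Rightarrow> real^'m" where
  "iota u = - u"

definition minkowski_patch :: "'m::finite set \<Rightarrow> (real^'m) set \<Rightarrow> bool" where
  "minkowski_patch N' M \<longleftrightarrow>
     (\<exists>v. v \<noteq> 0 \<and> pform N' v v = 0 \<and>
        (\<exists>x \<in> {u \<in> Ein_tilde N'. pform N' v u \<noteq> 0}.
            M = connected_component_set {u \<in> Ein_tilde N'. pform N' v u \<noteq> 0} x))"

primrec Ck_on :: "nat \<Rightarrow> ('a::real_normed_vector \<Rightarrow> 'b::real_normed_vector) \<Rightarrow> 'a set \<Rightarrow> bool" where
  "Ck_on 0 f S = continuous_on S f"
| "Ck_on (Suc k) f S =
     (\<exists>f'. (\<forall>x\<in>S. (f has_derivative f' x) (at x)) \<and> (\<forall>h. Ck_on k (\<lambda>x. f' x h) S))"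

definition smooth_on :: "('a::real_normed_vector \<Rightarrow> 'b::real_normed_vector) \<Rightarrow> 'a set \<Rightarrow> bool" where
  "smooth_on f S \<longleftrightarrow> (\<forall>k. Ck_on k f S)"

text \<open>Stereographic projection: a conformal diffeomorphism s from a Minkowski patch M of
  Ein_tilde (in R^{p+1,q+1}, negative coordinates N') onto R^{p,q} (negative coordinates N).
  Expressed via the inverse parametrisation inv_into M s : R^{p,q} \<rightarrow> M \<subseteq> R^{p+q+2},
  which is smooth and whose differential pulls back B to a positive multiple of b.\<close>
definition stereographic_projection ::
  "'m::finite set \<Rightarrow> 'n::finite set \<Rightarrow> (real^'m) set \<Rightarrow> (real^'m \<Rightarrow> real^'n) \<Rightarrow> bool" where
  "stereographic_projection N' N M s \<longleftrightarrow>
     minkowski_patch N' M \<and> bij_betw s M UNIV \<and> continuous_on M s \<and>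
     smooth_on (inv_into M s) UNIV \<and>
     (\<forall>y. \<exists>c>0. \<exists>\<phi>'. (inv_into M s has_derivative \<phi>') (at y) \<and>
          (\<forall>h k. pform N' (\<phi>' h) (\<phi>' k) = c * pform N h k))"

end

theory Submission
  imports Defs
begin

(*
  Write every Minkowski patch as P(v) = {u \<in> Ein_tilde. B(v,u) > 0} with v isotropic.  If some
  u \<in> P(v0) had -u \<notin> P(v1) \<union> P(v2), then B(v1,u) \<ge> 0 and B(v2,u) \<ge> 0.  In the affine chart of
  the light cone on the hyperplane B(v0,-) = B(v0,u), centred at u, each B(vi,-) is a quadratic
  function, and its value, linear part and curvature at u yield a direction -- or, when the two
  linear parts are opposite, a second-order curve -- along which both become positive.  This
  produces a point of P(v0) \<inter> P(v1) \<inter> P(v2), unless v2 is a negative multiple of v1, i.e.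
  P(v1) = iota(P(v2)).  The signature hypothesis supplies directions on which the
  form has a prescribed sign.
*)

definition gram :: "'n::finite set \<Rightarrow> real^'n \<Rightarrow> real^'n" where
  "gram N v = (\<chi> i. (if i \<in> N then -1 else 1) * v$i)"

lemma pform_eq_inner_gram: "pform N v w = gram N v \<bullet> w"
  unfolding pform_def gram_def inner_vec_def by (simp add: mult.assoc)

lemma gram_gram [simp]: "gram N (gram N v) = v"
  unfolding gram_def by (simp add: vec_eq_iff)

lemma linear_gram: "linear (gram N)"
  unfolding gram_def by (rule linearI) (auto simp: vec_eq_iff algebra_simps)

lemma pform_commute: "pform N v w = pform N w v"
  unfolding pform_def by (simp add: mult.commute)

lemma pform_add_left [simp]: "pform N (a + b) w = pform N a w + pform N b w"
  and pform_add_right [simp]: "pform N w (a + b) = pform N w a + pform N w b"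
  and pform_scaleR_left [simp]: "pform N (c *\<^sub>R a) w = c * pform N a w"
  and pform_scaleR_right [simp]: "pform N w (c *\<^sub>R a) = c * pform N w a"
  and pform_minus_left [simp]: "pform N (- a) w = - pform N a w"
  and pform_minus_right [simp]: "pform N w (- a) = - pform N w a"
  and pform_diff_left [simp]: "pform N (a - b) w = pform N a w - pform N b w"
  and pform_diff_right [simp]: "pform N w (a - b) = pform N w a - pform N w b"
  and pform_zero_left [simp]: "pform N 0 w = 0"
  and pform_zero_right [simp]: "pform N w 0 = 0"
  using linear_gram[of N]
  by (simp_all add: pform_eq_inner_gram linear_add linear_cmul linear_neg linear_diff linear_0
      inner_add_left inner_add_right inner_diff_left inner_diff_right)

lemma pform_gram_right: "pform N v (gram N w) = v \<bullet> w"
  unfolding pform_eq_inner_gram gram_def inner_vec_def by (auto intro!: sum.cong)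

lemma tendsto_pform [tendsto_intros]:
  "(f \<longlongrightarrow> a) F \<Longrightarrow> (g \<longlongrightarrow> b) F \<Longrightarrow> ((\<lambda>x. pform N (f x) (g x)) \<longlongrightarrow> pform N a b) F"
  unfolding pform_eq_inner_gram
  by (intro tendsto_intros bounded_linear.tendsto[OF linear_gram[unfolded linear_conv_bounded_linear]])

lemma continuous_on_pform [continuous_intros]:
  "continuous_on S f \<Longrightarrow> continuous_on S g \<Longrightarrow> continuous_on S (\<lambda>x. pform N (f x) (g x))"
  unfolding continuous_on_def by (auto intro: tendsto_pform)

lemma exists_supported_orthogonal:
  fixes a b :: "real^'n::finite"
  assumes "3 \<le> card I"
  obtains h where "h \<noteq> 0" "pform N a h = 0" "pform N b h = 0" "\<And>l. l \<notin> I \<Longrightarrow> h$l = 0"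
proof -
  obtain T where "T \<subseteq> I" "card T = 3" using ex_card[OF assms] by blast
  then obtain i j k where T: "T = {i,j,k}" "i \<noteq> j" "j \<noteq> k" "i \<noteq> k" by (auto simp: card_3_iff)
  define restrict :: "real^'n \<Rightarrow> real^3" where
    "restrict c = vector [c$i, c$j, c$k]" for c
  let ?S = "{restrict (gram N a), restrict (gram N b)}"
  have "dim ?S \<le> card ?S" by (rule dim_le_card) (auto intro: span_base)
  also have "\<dots> < DIM(real^3)" by (simp add: card_insert_if)
  finally obtain x where x: "x \<noteq> 0" "\<And>y. y \<in> span ?S \<Longrightarrow> orthogonal x y"
    using orthogonal_to_subspace_exists by blast
  define h where "h = x$1 *\<^sub>R axis i 1 + x$2 *\<^sub>R axis j 1 + x$3 *\<^sub>R axis k (1::real)"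
  have pform_h: "pform N c h = x \<bullet> restrict (gram N c)" for c
  proof -
    have "pform N c h = x$1 * gram N c $ i + x$2 * gram N c $ j + x$3 * gram N c $ k"
      unfolding pform_eq_inner_gram h_def by (simp add: inner_axis algebra_simps)
    also have "\<dots> = x \<bullet> restrict (gram N c)"
      unfolding restrict_def by (simp add: inner_vec_def sum_3)
    finally show ?thesis .
  qed
  have "h \<noteq> 0"
  proof
    assume "h = 0"
    then have "h$i = 0" "h$j = 0" "h$k = 0" by simp_all
    then have "x = 0" using T unfolding h_def by (simp add: vec_eq_iff forall_3 axis_def)
    with x show False by simp
  qed
  moreover have "pform N a h = 0" "pform N b h = 0"
    unfolding pform_h using x(2) by (simp_all add: orthogonal_def span_base)
  moreover have "h$l = 0" if "l \<notin> I" for l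
    using T \<open>T \<subseteq> I\<close> that unfolding h_def by (auto simp: axis_def)
  ultimately show ?thesis using that by blast
qed

lemma pform_self_supported_neg:
  assumes "I \<subseteq> N" "\<And>l. l \<notin> I \<Longrightarrow> h$l = 0"
  shows "pform N h h = - (norm h)\<^sup>2"
  unfolding pform_def power2_norm_eq_inner inner_vec_def
  using assms by (auto simp: sum_negf[symmetric] intro!: sum.cong) blast

lemma pform_self_supported_pos:
  assumes "I \<inter> N = {}" "\<And>l. l \<notin> I \<Longrightarrow> h$l = 0"
  shows "pform N h h = (norm h)\<^sup>2"
  unfolding pform_def power2_norm_eq_inner inner_vec_def
  using assms by (auto intro!: sum.cong) blast

lemma exists_signed_orthogonal:
  fixes a b :: "real^'n::finite"
  assumes "3 \<le> card N" "3 \<le> card (UNIV - N)" "\<sigma> \<noteq> 0"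
  obtains h where "pform N a h = 0" "pform N b h = 0" "0 < \<sigma> * pform N h h"
proof (cases "\<sigma> > 0")
  case True
  obtain h where h: "h \<noteq> 0" "pform N a h = 0" "pform N b h = 0" "\<And>l. l \<notin> UNIV - N \<Longrightarrow> h$l = 0"
    using exists_supported_orthogonal[OF assms(2)] by blast
  have "pform N h h = (norm h)\<^sup>2" by (rule pform_self_supported_pos[of "UNIV - N"]) (use h in auto)
  with h True that show ?thesis by simp
next
  case False
  obtain h where h: "h \<noteq> 0" "pform N a h = 0" "pform N b h = 0" "\<And>l. l \<notin> N \<Longrightarrow> h$l = 0"
    using exists_supported_orthogonal[OF assms(1)] by blast
  have "pform N h h = - (norm h)\<^sup>2" by (rule pform_self_supported_neg[of N]) (use h in auto)
  moreover have "\<sigma> < 0" using False assms(3) by simp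
  ultimately have "0 < \<sigma> * pform N h h" using h(1) by (simp add: mult_neg_pos)
  with h that show ?thesis by blast
qed

lemma exists_signed_direction:
  fixes a s :: "real^'n::finite"
  assumes "3 \<le> card N" "3 \<le> card (UNIV - N)" "\<sigma> \<noteq> 0" "s \<noteq> 0" "pform N a s = 0"
  obtains e where "pform N a e = 0" "0 < s \<bullet> e" "0 < \<sigma> * pform N e e"
proof -
  obtain h where h: "pform N a h = 0" "pform N (gram N s) h = 0" "0 < \<sigma> * pform N h h"
    using exists_signed_orthogonal[OF assms(1-3)] .
  have "((\<lambda>\<delta>. \<sigma> * pform N (h + \<delta> *\<^sub>R s) (h + \<delta> *\<^sub>R s)) \<longlongrightarrow>
      \<sigma> * pform N (h + 0 *\<^sub>R s) (h + 0 *\<^sub>R s)) (at_right 0)"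
    by (intro tendsto_intros)
  then have "\<forall>\<^sub>F \<delta> in at_right 0. 0 < \<sigma> * pform N (h + \<delta> *\<^sub>R s) (h + \<delta> *\<^sub>R s)"
    using h(3) order_tendstoD(1) by fastforce
  then have "\<forall>\<^sub>F \<delta> in at_right 0. 0 < \<delta> \<and> 0 < \<sigma> * pform N (h + \<delta> *\<^sub>R s) (h + \<delta> *\<^sub>R s)"
    by (intro eventually_conj eventually_at_right_less)
  then obtain \<delta> :: real where \<delta>: "0 < \<delta>" "0 < \<sigma> * pform N (h + \<delta> *\<^sub>R s) (h + \<delta> *\<^sub>R s)"
    using eventually_happens' trivial_limit_at_right_real by blast
  have "pform N a (h + \<delta> *\<^sub>R s) = 0" using h(1) assms(5) by simp
  moreover have "0 < s \<bullet> (h + \<delta> *\<^sub>R s)"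
    using h(2) assms(4) \<delta>(1) by (simp add: pform_eq_inner_gram inner_add_right)
  ultimately show ?thesis using that \<delta>(2) by blast
qed

definition pos_patch :: "'n::finite set \<Rightarrow> real^'n \<Rightarrow> (real^'n) set" where
  "pos_patch N v = {u \<in> Ein_tilde N. 0 < pform N v u}"

text \<open>The affine chart of the light cone on the hyperplane \<open>pform N v y = pform N v w\<close>,
  parametrised by the hyperplane \<open>pform N v x = 0\<close> through the origin.\<close>
definition null_lift :: "'n::finite set \<Rightarrow> real^'n \<Rightarrow> real^'n \<Rightarrow> real^'n \<Rightarrow> real^'n" where
  "null_lift N v w x = w + x - (pform N (w + x) (w + x) / (2 * pform N v w)) *\<^sub>R v"

lemma pform_self_diff_isotropic:
  assumes "pform N v v = 0"
  shows "pform N (a - k *\<^sub>R v) (a - k *\<^sub>R v) = pform N a a - 2 * k * pform N v a"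
  using assms pform_commute[of N a v] by (simp add: algebra_simps)

lemma null_lift_isotropic:
  assumes "pform N v v = 0" "pform N v w \<noteq> 0" "pform N v x = 0"
  shows "pform N (null_lift N v w x) (null_lift N v w x) = 0"
  using assms unfolding null_lift_def pform_self_diff_isotropic[OF assms(1)] by simp

lemma pform_null_lift:
  assumes "pform N v v = 0" "pform N v x = 0"
  shows "pform N v (null_lift N v w x) = pform N v w"
  using assms by (simp add: null_lift_def)

lemma null_lift_diff:
  assumes "pform N y y = 0"
  shows "null_lift N v w (y - w) = y"
  using assms by (simp add: null_lift_def)

lemma in_pos_patch_normalize:
  assumes "pform N y y = 0" "0 < pform N v y"
  shows "(1 / norm y) *\<^sub>R y \<in> pos_patch N v"
proof -
  have "y \<noteq> 0" using assms(2) by auto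
  then show ?thesis using assms unfolding pos_patch_def Ein_tilde_def by simp
qed

lemma connected_pos_patch:
  assumes "v \<noteq> 0" "pform N v v = 0"
  shows "connected (pos_patch N v)"
proof -
  define w where "w = (1 / (norm v)\<^sup>2) *\<^sub>R gram N v"
  have vw: "pform N v w = 1"
    using assms(1) by (simp add: w_def pform_gram_right power2_norm_eq_inner[symmetric])
  define V where "V = {x. pform N v x = 0}"
  define f where "f x = (1 / norm (null_lift N v w x)) *\<^sub>R null_lift N v w x" for x
  have lift_V: "pform N (null_lift N v w x) (null_lift N v w x) = 0"
      "pform N v (null_lift N v w x) = 1" if "x \<in> V" for x
    using that null_lift_isotropic[OF assms(2)] pform_null_lift[OF assms(2)] vw
    by (auto simp: V_def)
  have "connected V"
    unfolding V_def pform_eq_inner_gram by (intro convex_connected convex_hyperplane)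
  moreover have "continuous_on V f"
  proof -
    have "continuous_on V (null_lift N v w)"
      unfolding null_lift_def by (intro continuous_intros) (simp add: vw)
    moreover have "null_lift N v w x \<noteq> 0" if "x \<in> V" for x
      using lift_V(2)[OF that] by auto
    ultimately show ?thesis unfolding f_def by (intro continuous_intros) auto
  qed
  ultimately have "connected (f ` V)" by (rule connected_continuous_image[rotated])
  moreover have "f ` V = pos_patch N v"
  proof
    show "f ` V \<subseteq> pos_patch N v"
      unfolding f_def by (auto intro!: in_pos_patch_normalize simp: lift_V)
    show "pos_patch N v \<subseteq> f ` V"
    proof
      fix u assume u: "u \<in> pos_patch N v"
      define a where "a = pform N v u"
      have a: "0 < a" "pform N u u = 0" "norm u = 1"
        using u unfolding pos_patch_def Ein_tilde_def a_def by auto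
      have "(1 / a) *\<^sub>R u - w \<in> V" using a vw by (simp add: V_def a_def)
      moreover have "null_lift N v w ((1 / a) *\<^sub>R u - w) = (1 / a) *\<^sub>R u"
        using a(2) by (intro null_lift_diff) simp
      ultimately show "u \<in> f ` V" using a unfolding f_def by (auto intro!: image_eqI)
    qed
  qed
  ultimately show ?thesis by simp
qed

lemma connected_component_eq_pos_patch:
  assumes "v \<noteq> 0" "pform N v v = 0" "x \<in> pos_patch N v"
  shows "connected_component_set {u \<in> Ein_tilde N. pform N v u \<noteq> 0} x = pos_patch N v"
    (is "connected_component_set ?U x = _")
proof
  have "pos_patch N v \<subseteq> ?U" unfolding pos_patch_def by force
  then show "pos_patch N v \<subseteq> connected_component_set ?U x"
    by (rule connected_component_maximal[OF assms(3) connected_pos_patch[OF assms(1,2)]])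
  show "connected_component_set ?U x \<subseteq> pos_patch N v"
  proof
    fix y assume y: "y \<in> connected_component_set ?U x"
    show "y \<in> pos_patch N v"
    proof (rule ccontr)
      assume "y \<notin> pos_patch N v"
      then have "gram N v \<bullet> y \<le> 0" "0 \<le> gram N v \<bullet> x"
        using y assms(3) connected_component_subset[of ?U x]
        by (auto simp: pos_patch_def pform_eq_inner_gram)
      then obtain z where "z \<in> connected_component_set ?U x" "gram N v \<bullet> z = 0"
        using connected_ivt_hyperplane[OF connected_connected_component y] assms(3)
          \<open>pos_patch N v \<subseteq> connected_component_set ?U x\<close> by blast
      then show False
        using connected_component_subset[of ?U x] by (auto simp: pform_eq_inner_gram)
    qed
  qed
qed

lemma minkowski_patch_eq_pos_patch:
  assumes "minkowski_patch N M"
  obtains v where "v \<noteq> 0" "pform N v v = 0" "M = pos_patch N v"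
proof -
  obtain v x where v: "v \<noteq> 0" "pform N v v = 0" and x: "x \<in> Ein_tilde N" "pform N v x \<noteq> 0"
    and M: "M = connected_component_set {u \<in> Ein_tilde N. pform N v u \<noteq> 0} x"
    using assms unfolding minkowski_patch_def by blast
  define v' where "v' = (if 0 < pform N v x then v else - v)"
  have v': "v' \<noteq> 0" "pform N v' v' = 0" "x \<in> pos_patch N v'"
    using v x unfolding v'_def pos_patch_def by auto
  have "{u \<in> Ein_tilde N. pform N v u \<noteq> 0} = {u \<in> Ein_tilde N. pform N v' u \<noteq> 0}"
    unfolding v'_def by auto
  then have "M = pos_patch N v'"
    using M connected_component_eq_pos_patch[OF v'] by simp
  with v' that show ?thesis by blast
qed

lemma iota_pos_patch: "iota ` pos_patch N v = pos_patch N (- v)"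
proof
  show "iota ` pos_patch N v \<subseteq> pos_patch N (- v)"
    unfolding iota_def pos_patch_def Ein_tilde_def by auto
  show "pos_patch N (- v) \<subseteq> iota ` pos_patch N v"
  proof
    fix u assume "u \<in> pos_patch N (- v)"
    then have "- u \<in> pos_patch N v" unfolding pos_patch_def Ein_tilde_def by auto
    then show "u \<in> iota ` pos_patch N v" unfolding iota_def by (rule rev_image_eqI) simp
  qed
qed

lemma pos_patch_scaleR: "0 < \<rho> \<Longrightarrow> pos_patch N (\<rho> *\<^sub>R v) = pos_patch N v"
  unfolding pos_patch_def by (auto simp: zero_less_mult_iff)

lemma eventually_at_right_quadratic_pos:
  fixes \<beta> l a :: real
  assumes "0 \<le> \<beta>" and "0 < \<beta> \<or> 0 < l \<or> (l = 0 \<and> a < 0)"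
  shows "\<forall>\<^sub>F t in at_right 0. 0 < \<beta> + t * l - a * t\<^sup>2"
proof -
  have t_pos: "\<forall>\<^sub>F t in at_right 0. (0::real) < t" by (rule eventually_at_right_less)
  consider "0 < \<beta>" | "0 < l" | "l = 0" "a < 0" using assms(2) by blast
  then show ?thesis
  proof cases
    case 1
    have "((\<lambda>t. \<beta> + t * l - a * t\<^sup>2) \<longlongrightarrow> \<beta> + 0 * l - a * 0\<^sup>2) (at_right 0)"
      by (intro tendsto_intros)
    with 1 show ?thesis using order_tendstoD(1) by fastforce
  next
    case 2
    have "((\<lambda>t. l - a * t) \<longlongrightarrow> l - a * 0) (at_right 0)" by (intro tendsto_intros)
    with 2 have "\<forall>\<^sub>F t in at_right 0. 0 < l - a * t" using order_tendstoD(1) by fastforce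
    with t_pos show ?thesis
    proof eventually_elim
      case (elim t)
      then have "0 < t * (l - a * t)" by simp
      with assms(1) show ?case by (simp add: power2_eq_square algebra_simps)
    qed
  next
    case 3
    from t_pos show ?thesis
    proof eventually_elim
      case (elim t)
      with 3 have "a * t\<^sup>2 < 0" by (simp add: mult_neg_pos)
      with 3 assms(1) show ?case by simp
    qed
  qed
qed

lemma exists_quadratic_window:
  fixes l a \<kappa> :: real
  assumes "0 < l" "0 < \<kappa>"
  obtains t where "0 < t * l - a * t\<^sup>2" "t * l - a * t\<^sup>2 < \<kappa> * t\<^sup>2"
proof -
  obtain u where u: "a < u" "u < a + \<kappa>" "u \<noteq> 0"
  proof (cases "a + \<kappa> / 2 = 0")
    case True
    with assms(2) that show ?thesis by (intro that[of "a + \<kappa> / 3"]) auto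
  next
    case False
    with assms(2) that show ?thesis by (intro that[of "a + \<kappa> / 2"]) auto
  qed
  define t where "t = l / u"
  have "t \<noteq> 0" using assms(1) u(3) by (simp add: t_def)
  have "t * l - a * t\<^sup>2 = t\<^sup>2 * (u - a)"
    using u(3) by (simp add: t_def power2_eq_square field_simps)
  then have "0 < t * l - a * t\<^sup>2" "t * l - a * t\<^sup>2 < \<kappa> * t\<^sup>2"
    using u \<open>t \<noteq> 0\<close> by (simp_all add: mult_strict_left_mono)
  with that show ?thesis by blast
qed

lemma inner_pos_norm_combination:
  fixes x y :: "'a::real_inner"
  defines "E \<equiv> norm y *\<^sub>R x + norm x *\<^sub>R y"
  assumes "E \<noteq> 0"
  shows "0 < x \<bullet> E" "0 < y \<bullet> E"
proof -
  define c where "c = norm x * norm y + x \<bullet> y"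
  have xE: "x \<bullet> E = norm x * c" and yE: "y \<bullet> E = norm y * c"
    by (simp_all add: E_def c_def inner_add_right inner_commute algebra_simps
        flip: power2_norm_eq_inner power2_eq_square)
  have "E \<bullet> E = norm y * (x \<bullet> E) + norm x * (y \<bullet> E)"
    by (simp add: E_def inner_add_left)
  also have "\<dots> = 2 * (norm x * norm y) * c"
    by (simp add: xE yE)
  finally have "E \<bullet> E = 2 * (norm x * norm y) * c" .
  moreover have "0 < E \<bullet> E" using assms(2) by simp
  ultimately have "0 < 2 * (norm x * norm y) * c" by simp
  then have "0 < norm x * norm y" "0 < c"
    by (smt (verit) mult_nonneg_nonneg norm_ge_zero zero_less_mult_iff)+
  then show "0 < x \<bullet> E" "0 < y \<bullet> E"
    unfolding xE yE by (simp_all add: zero_less_mult_iff)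
qed

locale null_chart =
  fixes N :: "'n::finite set" and v0 z :: "real^'n"
  assumes isotropic_v0: "pform N v0 v0 = 0"
    and isotropic_z: "pform N z z = 0"
    and pform_v0_z_pos: "0 < pform N v0 z"
begin

abbreviation chart :: "real^'n \<Rightarrow> real^'n" where
  "chart \<equiv> null_lift N v0 z"

definition slope :: "real^'n \<Rightarrow> real^'n" where
  "slope v = v - (pform N v v0 / pform N v0 z) *\<^sub>R z"

definition curv :: "real^'n \<Rightarrow> real" where
  "curv v = pform N v v0 / (2 * pform N v0 z)"

text \<open>The Euclidean projection of \<open>gram N (slope v)\<close> onto the hyperplane
  \<open>pform N v0 e = 0\<close>, which represents the linear part of \<open>pform N v \<circ> chart\<close> there.\<close>
definition grad :: "real^'n \<Rightarrow> real^'n" where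
  "grad v = gram N (slope v) - ((v0 \<bullet> slope v) / (norm v0)\<^sup>2) *\<^sub>R gram N v0"

definition meets :: "real^'n \<Rightarrow> real^'n \<Rightarrow> bool" where
  "meets v w \<longleftrightarrow> pos_patch N v0 \<inter> pos_patch N v \<inter> pos_patch N w \<noteq> {}"

definition rises :: "real^'n \<Rightarrow> real^'n \<Rightarrow> bool" where
  "rises v e \<longleftrightarrow> (\<forall>\<^sub>F t in at_right 0. 0 < pform N v (chart (t *\<^sub>R e)))"

lemma v0_nonzero: "v0 \<noteq> 0"
  using pform_v0_z_pos by auto

lemma chart_isotropic: "pform N v0 e = 0 \<Longrightarrow> pform N (chart e) (chart e) = 0"
  using null_lift_isotropic[OF isotropic_v0] pform_v0_z_pos by simp

lemma pform_v0_chart: "pform N v0 e = 0 \<Longrightarrow> pform N v0 (chart e) = pform N v0 z"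
  by (rule pform_null_lift[OF isotropic_v0])

lemma pform_chart:
  assumes "pform N v0 e = 0"
  shows "pform N v (chart e) = pform N v z + pform N (slope v) e - curv v * pform N e e"
proof -
  have "pform N (z + e) (z + e) = 2 * pform N z e + pform N e e"
    using isotropic_z pform_commute[of N e z] by simp
  then show ?thesis
    using pform_v0_z_pos by (simp add: null_lift_def slope_def curv_def field_simps)
qed

lemma inner_grad: "pform N v0 e = 0 \<Longrightarrow> grad v \<bullet> e = pform N (slope v) e"
  by (simp add: grad_def inner_diff_left pform_eq_inner_gram)

lemma pform_v0_grad: "pform N v0 (grad v) = 0"
  using v0_nonzero by (simp add: grad_def pform_gram_right flip: power2_norm_eq_inner)

lemma pform_chart_scaleR:
  assumes "pform N v0 e = 0"
  shows "pform N v (chart (t *\<^sub>R e)) = pform N v z + t * (grad v \<bullet> e) - curv v * pform N e e * t\<^sup>2"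
  using pform_chart[of "t *\<^sub>R e" v] inner_grad[OF assms] assms
  by (simp add: power2_eq_square algebra_simps)

lemma grad_combination: "grad (a *\<^sub>R v + b *\<^sub>R w) = a *\<^sub>R grad v + b *\<^sub>R grad w"
proof -
  have "slope (a *\<^sub>R v + b *\<^sub>R w) = a *\<^sub>R slope v + b *\<^sub>R slope w"
    by (simp add: slope_def algebra_simps add_divide_distrib scaleR_add_left)
  then show ?thesis
    using linear_gram[of N]
    by (simp add: grad_def linear_add linear_cmul inner_add_right algebra_simps
        add_divide_distrib scaleR_add_left)
qed

lemma pform_z_chart_scaleR:
  assumes "pform N v0 e = 0"
  shows "pform N z (chart (t *\<^sub>R e)) = - pform N e e * t\<^sup>2 / 2"
proof -
  have "slope z = 0" using pform_v0_z_pos pform_commute[of N z v0] by (simp add: slope_def)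
  then have "grad z = 0" using linear_0[OF linear_gram] by (simp add: grad_def)
  moreover have "curv z = 1 / 2" using pform_v0_z_pos pform_commute[of N z v0] by (simp add: curv_def)
  ultimately show ?thesis using pform_chart_scaleR[OF assms, of z t] isotropic_z by simp
qed

lemma eq_scaleR_z_if_flat:
  assumes "grad v = 0" "pform N v z = 0"
  shows "v = (2 * curv v) *\<^sub>R z"
proof -
  define k where "k = (v0 \<bullet> slope v) / (norm v0)\<^sup>2"
  have "gram N (slope v) = k *\<^sub>R gram N v0" using assms(1) by (simp add: grad_def k_def)
  then have "slope v = k *\<^sub>R v0" by (metis gram_gram linear_cmul[OF linear_gram])
  moreover have "pform N (slope v) z = 0" using assms(2) isotropic_z by (simp add: slope_def)
  ultimately have "slope v = 0" using pform_v0_z_pos by simp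
  then show ?thesis using pform_v0_z_pos by (simp add: slope_def curv_def)
qed

lemma antiparallel_eq_scaleR_z:
  assumes "pform N v z = 0" "pform N w z = 0" "grad v \<noteq> 0" "grad w \<noteq> 0"
    and "norm (grad w) *\<^sub>R grad v + norm (grad v) *\<^sub>R grad w = 0"
    and "\<not> (\<exists>\<rho>>0. w = - \<rho> *\<^sub>R v)"
  obtains K where "K \<noteq> 0" "norm (grad w) *\<^sub>R v + norm (grad v) *\<^sub>R w = K *\<^sub>R z"
proof -
  define n1 n2 where "n1 = norm (grad v)" and "n2 = norm (grad w)"
  have n_pos: "0 < n1" "0 < n2" using assms(3,4) by (simp_all add: n1_def n2_def)
  define u where "u = n2 *\<^sub>R v + n1 *\<^sub>R w"
  have "grad u = 0" using assms(5) by (simp add: u_def grad_combination n1_def n2_def)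
  moreover have "pform N u z = 0" using assms(1,2) by (simp add: u_def)
  ultimately have u_z: "u = (2 * curv u) *\<^sub>R z" by (rule eq_scaleR_z_if_flat)
  have "2 * curv u \<noteq> 0"
  proof
    assume "2 * curv u = 0"
    then have "n1 *\<^sub>R w = - (n2 *\<^sub>R v)"
      using u_z by (simp add: u_def eq_neg_iff_add_eq_0 add.commute)
    then have "(1 / n1) *\<^sub>R (n1 *\<^sub>R w) = - (n2 / n1) *\<^sub>R v" by simp
    then have "w = - (n2 / n1) *\<^sub>R v" using n_pos by simp
    moreover have "0 < n2 / n1" using n_pos by simp
    ultimately show False using assms(6) by blast
  qed
  with u_z that show ?thesis unfolding u_def n1_def n2_def by blast
qed

lemma meets_intro:
  assumes "pform N y y = 0" "0 < pform N v0 y" "0 < pform N v y" "0 < pform N w y"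
  shows "meets v w"
  using in_pos_patch_normalize[OF assms(1)] assms(2-4) unfolding meets_def by blast

lemma meets_commute: "meets v w \<longleftrightarrow> meets w v"
  by (auto simp: meets_def)

lemma rises_intro:
  assumes "pform N v0 e = 0" "0 \<le> pform N v z"
    and "0 < pform N v z \<or> 0 < grad v \<bullet> e \<or> (grad v \<bullet> e = 0 \<and> curv v * pform N e e < 0)"
  shows "rises v e"
  unfolding rises_def pform_chart_scaleR[OF assms(1)]
  by (rule eventually_at_right_quadratic_pos) (use assms in auto)

lemma meets_if_rises:
  assumes "pform N v0 e = 0" "rises v e" "rises w e"
  shows "meets v w"
proof -
  have "\<forall>\<^sub>F t in at_right 0. 0 < pform N v (chart (t *\<^sub>R e)) \<and> 0 < pform N w (chart (t *\<^sub>R e))"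
    using assms(2,3) unfolding rises_def by (rule eventually_conj)
  then obtain t :: real where "0 < pform N v (chart (t *\<^sub>R e))" "0 < pform N w (chart (t *\<^sub>R e))"
    using eventually_happens' trivial_limit_at_right_real by blast
  moreover have "pform N v0 (t *\<^sub>R e) = 0" using assms(1) by simp
  ultimately show ?thesis
    using chart_isotropic pform_v0_chart pform_v0_z_pos by (intro meets_intro) auto
qed

end

locale wide_null_chart = null_chart +
  assumes card_neg: "3 \<le> card N" and card_pos: "3 \<le> card (UNIV - N)"
begin

lemma exists_rising:
  assumes "v \<noteq> 0" "0 \<le> pform N v z"
  obtains e where "pform N v0 e = 0" "rises v e"
proof -
  consider "0 < pform N v z" | "grad v \<noteq> 0" | "pform N v z = 0" "grad v = 0"
    using assms(2) by linarith
  then show ?thesis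
  proof cases
    case 1
    then show ?thesis using that[of 0] rises_intro[of 0 v] by simp
  next
    case 2
    then have "rises v (grad v)" using pform_v0_grad assms(2) by (intro rises_intro) auto
    then show ?thesis using that pform_v0_grad by blast
  next
    case 3
    then have "curv v \<noteq> 0" using eq_scaleR_z_if_flat assms(1) by fastforce
    then obtain e where "pform N v0 e = 0" "0 < - curv v * pform N e e"
      using exists_signed_orthogonal[OF card_neg card_pos, of "- curv v" v0 v0] by auto
    then show ?thesis using that rises_intro[of e v] 3 by (simp add: mult_less_0_iff)
  qed
qed

lemma meets_if_pos:
  assumes "0 < pform N v z" "w \<noteq> 0" "0 \<le> pform N w z"
  shows "meets v w"
proof -
  obtain e where e: "pform N v0 e = 0" "rises w e" using exists_rising[OF assms(2,3)] .
  moreover have "rises v e" using assms(1) e(1) by (intro rises_intro) auto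
  ultimately show ?thesis using meets_if_rises by blast
qed

lemma meets_if_flat:
  assumes "v \<noteq> 0" "w \<noteq> 0" "grad v = 0" "grad w = 0" "pform N v z = 0" "pform N w z = 0"
    and "meets v v" and "\<not> (\<exists>\<rho>>0. w = - \<rho> *\<^sub>R v)"
  shows "meets v w"
proof -
  have v: "v = (2 * curv v) *\<^sub>R z" and w: "w = (2 * curv w) *\<^sub>R z"
    using eq_scaleR_z_if_flat assms(3-6) by blast+
  define \<rho> where "\<rho> = curv w / curv v"
  have "curv v \<noteq> 0" "curv w \<noteq> 0" using assms(1,2) v w by auto
  then have w_v: "w = \<rho> *\<^sub>R v" and "\<rho> \<noteq> 0"
    by (subst w, subst v, simp add: \<rho>_def, simp add: \<rho>_def)
  have "0 < \<rho>"
  proof (rule ccontr)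
    assume "\<not> 0 < \<rho>"
    with w_v \<open>\<rho> \<noteq> 0\<close> have "0 < - \<rho>" "w = - (- \<rho>) *\<^sub>R v" by auto
    with assms(8) show False by blast
  qed
  then show ?thesis using assms(7) by (simp add: meets_def w_v pos_patch_scaleR)
qed

lemma meets_if_flat_sloped:
  assumes "v \<noteq> 0" "grad v = 0" "pform N v z = 0" "grad w \<noteq> 0" "0 \<le> pform N w z"
  shows "meets v w"
proof -
  have "curv v \<noteq> 0" using eq_scaleR_z_if_flat[OF assms(2,3)] assms(1) by auto
  then obtain e where e: "pform N v0 e = 0" "0 < grad w \<bullet> e" "0 < - curv v * pform N e e"
    using exists_signed_direction[OF card_neg card_pos, of "- curv v" "grad w" v0]
      assms(4) pform_v0_grad by auto
  have "rises v e" by (rule rises_intro) (use e assms(2,3) in \<open>auto simp: mult_less_0_iff\<close>)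
  moreover have "rises w e" by (rule rises_intro) (use e assms(5) in auto)
  ultimately show ?thesis by (rule meets_if_rises[OF e(1)])
qed

lemma meets_if_sloped:
  assumes "0 \<le> pform N v z" "0 \<le> pform N w z"
    and "norm (grad w) *\<^sub>R grad v + norm (grad v) *\<^sub>R grad w \<noteq> 0" (is "?e \<noteq> 0")
  shows "meets v w"
proof -
  have "pform N v0 ?e = 0" using pform_v0_grad by simp
  moreover have "rises v ?e" "rises w ?e"
    using inner_pos_norm_combination[OF assms(3)] assms(1,2) calculation
    by (auto intro: rises_intro)
  ultimately show ?thesis by (rule meets_if_rises)
qed

text \<open>The linear parts of \<open>pform N v\<close> and \<open>pform N w\<close> in the chart are opposite, so one
  works at second order: along a line, \<open>n1 * pform N w = K * pform N z - n2 * pform N v\<close> with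
  \<open>K * pform N z\<close> positive and quadratic, and the line is chosen so that \<open>pform N v\<close> is
  positive but smaller than that term.\<close>
lemma meets_if_antiparallel:
  assumes "pform N v z = 0" "pform N w z = 0" "grad v \<noteq> 0" "grad w \<noteq> 0"
    and "norm (grad w) *\<^sub>R grad v + norm (grad v) *\<^sub>R grad w = 0"
    and "\<not> (\<exists>\<rho>>0. w = - \<rho> *\<^sub>R v)"
  shows "meets v w"
proof -
  define n1 n2 where "n1 = norm (grad v)" and "n2 = norm (grad w)"
  have n_pos: "0 < n1" "0 < n2" using assms(3,4) by (simp_all add: n1_def n2_def)
  obtain K where K: "K \<noteq> 0" "n2 *\<^sub>R v + n1 *\<^sub>R w = K *\<^sub>R z"
    using antiparallel_eq_scaleR_z[OF assms] unfolding n1_def n2_def by blast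
  obtain e where e: "pform N v0 e = 0" "0 < grad v \<bullet> e" "0 < - K * pform N e e"
    using exists_signed_direction[OF card_neg card_pos, of "- K" "grad v" v0]
      K(1) assms(3) pform_v0_grad by auto
  define \<kappa> where "\<kappa> = - K * pform N e e / (2 * n2)"
  have "0 < \<kappa>" using e(3) n_pos unfolding \<kappa>_def by (intro divide_pos_pos) auto
  then obtain t where t: "0 < t * (grad v \<bullet> e) - curv v * pform N e e * t\<^sup>2"
      "t * (grad v \<bullet> e) - curv v * pform N e e * t\<^sup>2 < \<kappa> * t\<^sup>2"
    using exists_quadratic_window[OF e(2)] by blast
  define y where "y = chart (t *\<^sub>R e)"
  have v_y: "pform N v y = t * (grad v \<bullet> e) - curv v * pform N e e * t\<^sup>2"
    using pform_chart_scaleR[OF e(1), of v t] assms(1) by (simp add: y_def)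
  have "n2 * pform N v y + n1 * pform N w y = K * pform N z y"
    using arg_cong[OF K(2), of "\<lambda>x. pform N x y"] by simp
  moreover have "n2 * (\<kappa> * t\<^sup>2) = K * pform N z y"
    using n_pos pform_z_chart_scaleR[OF e(1)] by (simp add: y_def \<kappa>_def)
  ultimately have "n1 * pform N w y = n2 * (\<kappa> * t\<^sup>2 - pform N v y)"
    unfolding right_diff_distrib by linarith
  also have "0 < \<dots>" using t n_pos by (simp add: v_y)
  finally have "0 < pform N w y" using n_pos by (simp add: zero_less_mult_iff)
  moreover have "pform N y y = 0" "pform N v0 y = pform N v0 z"
    using chart_isotropic pform_v0_chart e(1) by (simp_all add: y_def)
  ultimately show ?thesis
    using t(1) v_y pform_v0_z_pos by (intro meets_intro[of y]) simp_all
qed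

lemma meets_if_nonneg:
  assumes "v \<noteq> 0" "w \<noteq> 0" "0 \<le> pform N v z" "0 \<le> pform N w z"
    and "meets v v" and "\<not> (\<exists>\<rho>>0. w = - \<rho> *\<^sub>R v)"
  shows "meets v w"
proof -
  consider "0 < pform N v z" | "0 < pform N w z" | "pform N v z = 0" "pform N w z = 0"
    using assms(3,4) by linarith
  then show ?thesis
  proof cases
    case 1
    then show ?thesis using meets_if_pos assms(2,4) by blast
  next
    case 2
    then show ?thesis using meets_if_pos assms(1,3) meets_commute by blast
  next
    case 3
    note base = 3
    consider "grad v = 0" "grad w = 0" | "grad v = 0" "grad w \<noteq> 0" | "grad v \<noteq> 0" "grad w = 0"
      | "norm (grad w) *\<^sub>R grad v + norm (grad v) *\<^sub>R grad w \<noteq> 0"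
      | "grad v \<noteq> 0" "grad w \<noteq> 0" "norm (grad w) *\<^sub>R grad v + norm (grad v) *\<^sub>R grad w = 0"
      by blast
    then show ?thesis
    proof cases
      case 1
      then show ?thesis using meets_if_flat assms(1,2,5,6) base by blast
    next
      case 2
      then show ?thesis using meets_if_flat_sloped assms(1,4) base by blast
    next
      case 3
      then have "meets w v" using meets_if_flat_sloped assms(2,3) base by blast
      then show ?thesis using meets_commute by blast
    next
      case 4
      then show ?thesis using meets_if_sloped assms(3,4) by blast
    next
      case 5
      then show ?thesis using meets_if_antiparallel assms(6) base by blast
    qed
  qed
qed

end

lemma antipode_pos_patch_subset:
  fixes v0 v1 v2 :: "real^'n::finite"
  assumes "3 \<le> card N" "3 \<le> card (UNIV - N)" "pform N v0 v0 = 0" "v2 \<noteq> 0"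
    and "pos_patch N v0 \<inter> pos_patch N v1 \<noteq> {}"
    and "pos_patch N v0 \<inter> pos_patch N v1 \<inter> pos_patch N v2 = {}"
    and "pos_patch N v1 \<noteq> iota ` pos_patch N v2"
  shows "iota ` pos_patch N v0 \<subseteq> pos_patch N v1 \<union> pos_patch N v2"
proof
  fix x assume "x \<in> iota ` pos_patch N v0"
  then obtain u where u: "u \<in> pos_patch N v0" "x = - u" by (auto simp: iota_def)
  then have u_chart: "pform N u u = 0" "0 < pform N v0 u" "- u \<in> Ein_tilde N"
    by (simp_all add: pos_patch_def Ein_tilde_def)
  interpret wide_null_chart N v0 u
    by unfold_locales (use assms(1-3) u_chart in auto)
  show "x \<in> pos_patch N v1 \<union> pos_patch N v2"
  proof (rule ccontr)
    assume "x \<notin> pos_patch N v1 \<union> pos_patch N v2"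
    with u(2) u_chart(3) have "0 \<le> pform N v1 u" "0 \<le> pform N v2 u"
      by (simp_all add: pos_patch_def)
    moreover have "v1 \<noteq> 0" using assms(5) by (auto simp: pos_patch_def)
    moreover have "\<not> (\<exists>\<rho>>0. v2 = - \<rho> *\<^sub>R v1)"
    proof
      assume "\<exists>\<rho>>0. v2 = - \<rho> *\<^sub>R v1"
      then obtain \<rho> where "0 < \<rho>" "- v2 = \<rho> *\<^sub>R v1" by auto
      then have "iota ` pos_patch N v2 = pos_patch N v1"
        by (simp add: iota_pos_patch pos_patch_scaleR)
      with assms(7) show False by simp
    qed
    moreover have "meets v1 v1" using assms(5) by (simp add: meets_def)
    ultimately have "meets v1 v2" using assms(4) meets_if_nonneg by blast
    with assms(6) show False by (simp add: meets_def)
  qed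
qed

lemma Hset_nonempty:
  assumes "w \<noteq> 0"
  shows "Hset N w \<alpha> \<noteq> {}"
proof -
  define x where "x = ((\<bar>\<alpha>\<bar> + 1) / (norm w)\<^sup>2) *\<^sub>R gram N w"
  have "pform N w x = \<bar>\<alpha>\<bar> + 1"
    using assms by (simp add: x_def pform_gram_right flip: power2_norm_eq_inner)
  then have "x \<in> Hset N w \<alpha>" by (simp add: Hset_def)
  then show ?thesis by blast
qed

theorem fact5p4:
  fixes N :: "'n::finite set" and N' :: "'m::finite set"
    and M0 M1 M2 :: "(real^'m) set" and s :: "real^'m \<Rightarrow> real^'n"
  assumes "CARD('m) = CARD('n) + 2" and "card N' = card N + 1"
    and "card N \<ge> 2" and "CARD('n) - card N \<ge> 2"
    and "minkowski_patch N' M0" and "minkowski_patch N' M1" and "minkowski_patch N' M2"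
    and "M1 \<noteq> iota ` M2"
    and "stereographic_projection N' N M0 s"
    and "\<exists>w \<alpha>. w \<in> light_cone N - {0} \<and> s ` (M0 \<inter> M1) = Hset N w \<alpha>"
    and "\<exists>w \<alpha>. w \<in> light_cone N - {0} \<and> s ` (M0 \<inter> M2) = Hset N w \<alpha>"
    and "(M0 \<inter> M1) \<inter> (M0 \<inter> M2) = {}"
  shows "iota ` M0 \<subseteq> M1 \<union> M2"
proof -
  obtain v0 v1 v2 where v0: "pform N' v0 v0 = 0" "M0 = pos_patch N' v0"
    and v1: "M1 = pos_patch N' v1" and v2: "v2 \<noteq> 0" "M2 = pos_patch N' v2"
    using minkowski_patch_eq_pos_patch assms(5-7) by metis
  have "card N \<le> CARD('n)" by (rule card_mono) auto
  moreover have "card (UNIV - N') = CARD('m) - card N'" by (rule card_Diff_subset) auto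
  ultimately have "3 \<le> card N'" "3 \<le> card (UNIV - N')" using assms(1-4) by simp_all
  moreover have "M0 \<inter> M1 \<noteq> {}" using assms(10) Hset_nonempty by fastforce
  ultimately show ?thesis
    using antipode_pos_patch_subset[of N' v0 v2 v1] v0 v1 v2 assms(8,12) by (simp add: Int_ac)
qed

end
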